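(* Let $\{r_\xi:\xi<\kappa\}\subseteq[0,1]$ be a (one-to-one) enumeration of a Luzin set, and let $f_\xi:[0,1]\setminus\{r_\xi\}\to[-1,1]$ ($\xi<\kappa$) be any splitting functions. Let $K$ be the split $[0,1]$ (unordered split interval) induced by $(f_\xi)_{\xi<\kappa}$. Then no nonmetrizable compact subspace of any continuous image of $K$ is totally disconnected.
   Context: A Luzin set is an uncountable subset of $\mathbb R$ whose intersection with every nowhere dense subset of $\mathbb R$ is countable. Split $M$ (definition), here with $M=[0,1]$ and $K_\xi=[-1,1]$: given a compact metrizable $M$ without isolated points, compact metrizable $K_\xi$ ($\xi<\kappa$), distinct points $r_\xi\in M$, and continuous $f_\xi:M\setminus\{r_\xi\}\to K_\xi$ ("splitting functions") such that $f_\xi[U\setminus\{r_\xi\}]$ is dense in $K_\xi$ for every open neighbourhood $U$ of $r_\xi$, the split $M$ induced by $(f_\xi)_{\xi<\kappa}$ is the subspace $K$ of $M^{\{*\}}\times\prod_{\xi<\kappa}K_\xi$ consisting of the points $x_{\xi,t}$ ($\xi<\kappa$, $t\in K_\xi$) with $x_{\xi,t}( * )=r_\xi$, $x_{\xi,t}(\xi)=t$, $x_{\xi,t}(\eta)=f_\eta(r_\xi)$ for $\eta\ne\xi$, and the points $x_r$ ($r\in M\setminus\{r_\xi:\xi<\kappa\}$) with $x_r( * )=r$, $x_r(\xi)=f_\xi(r)$ for all $\xi$. *)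

theory Defs
  imports "HOL-Analysis.Analysis"
begin

definition nowhere_dense_real :: "real set \<Rightarrow> bool" where
  "nowhere_dense_real N \<longleftrightarrow> interior (closure N) = {}"

definition luzin_set :: "real set \<Rightarrow> bool" where
  "luzin_set L \<longleftrightarrow> uncountable L \<and>
     (\<forall>N. nowhere_dense_real N \<longrightarrow> countable (L \<inter> N))"

definition splitting_function :: "real \<Rightarrow> (real \<Rightarrow> real) \<Rightarrow> bool" where
  "splitting_function r f \<longleftrightarrow>
     continuous_on ({0..1} - {r}) f \<and> f ` ({0..1} - {r}) \<subseteq> {-1..1} \<and>
     (\<forall>U. openin (top_of_set {0..1}) U \<and> r \<in> U \<longrightarrow>
          {-1..1} \<subseteq> closure (f ` (U - {r})))"

definition split_ambient :: "'i set \<Rightarrow> (real \<times> ('i \<Rightarrow> real)) topology" where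
  "split_ambient I = prod_topology (top_of_set {0..1})
      (product_topology (\<lambda>_. top_of_set {-1..1}) I)"

definition split_points ::
  "'i set \<Rightarrow> ('i \<Rightarrow> real) \<Rightarrow> ('i \<Rightarrow> real \<Rightarrow> real) \<Rightarrow> (real \<times> ('i \<Rightarrow> real)) set" where
  "split_points I r f =
     {(r \<xi>, \<lambda>\<eta>\<in>I. if \<eta> = \<xi> then t else f \<eta> (r \<xi>)) | \<xi> t. \<xi> \<in> I \<and> t \<in> {-1..1}}
   \<union> {(x, \<lambda>\<eta>\<in>I. f \<eta> x) | x. x \<in> {0..1} \<and> x \<notin> r ` I}"

definition split_space ::
  "'i set \<Rightarrow> ('i \<Rightarrow> real) \<Rightarrow> ('i \<Rightarrow> real \<Rightarrow> real) \<Rightarrow> (real \<times> ('i \<Rightarrow> real)) topology" where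
  "split_space I r f = subtopology (split_ambient I) (split_points I r f)"

definition totally_disconnected_space :: "'a topology \<Rightarrow> bool" where
  "totally_disconnected_space X \<longleftrightarrow>
     (\<forall>x\<in>topspace X. connected_component_of_set X x = {x})"

end

theory Submission
  imports Defs
begin

text \<open>Let \<open>C\<close> be compact and totally disconnected, and let \<open>L\<close> be the compact set of points of the
  split interval \<open>K\<close> mapped into \<open>C\<close>. Each fiber \<open>{x\<^sub>\<xi>\<^sub>,\<^sub>t | t \<in> [-1,1]}\<close> is an arc, so \<open>g\<close>
  is constant on it as soon as it lies in \<open>L\<close>; and by the density of \<open>f\<^sub>\<xi>\<close> near \<open>r\<^sub>\<xi>\<close>, it lies in
  \<open>L\<close> whenever \<open>r\<^sub>\<xi>\<close> is an interior point of the projection \<open>M\<close> of \<open>L\<close> to \<open>[0,1]\<close>. So the set \<open>J\<close> of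
  those \<open>\<xi>\<close> for which \<open>g\<close> separates points of the fiber in \<open>L\<close> is mapped by \<open>r\<close> into the nowhere
  dense set \<open>M - interior M\<close>, and it is countable because \<open>r ` I\<close> is a Luzin set. Hence \<open>g\<close> restricted
  to \<open>L\<close> factors through the projection onto \<open>[0,1] \<times> [-1,1]\<^sup>J\<close>, a compact metrizable space, and
  its Hausdorff continuous image \<open>C\<close> is metrizable.\<close>

lemma compact_metrizable_imp_second_countable:
  assumes "compact_space X" "metrizable_space X"
  shows "second_countable X"
proof -
  obtain M d where md: "Metric_space M d" and X: "X = Metric_space.mtopology M d"
    using assms(2) unfolding metrizable_space_def by blast
  interpret Metric_space M d by (rule md)
  have "mtotally_bounded M"
    using assms(1) X compact_space_eq_mcomplete_mtotally_bounded by blast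
  then have "\<forall>n. \<exists>K. finite K \<and> K \<subseteq> M \<and> M \<subseteq> (\<Union>x\<in>K. mball x (1 / Suc n))"
    unfolding mtotally_bounded_def by simp
  then obtain K where K: "\<And>n. finite (K n) \<and> K n \<subseteq> M \<and> M \<subseteq> (\<Union>x\<in>K n. mball x (1 / Suc n))"
    by metis
  define \<B> where "\<B> = (\<Union>n. (\<lambda>x. mball x (1 / Suc n)) ` K n)"
  have "\<exists>V\<in>\<B>. x \<in> V \<and> V \<subseteq> U" if U: "openin X U" "x \<in> U" for U x
  proof -
    have xM: "x \<in> M" using U X openin_subset by fastforce
    obtain e where e: "e > 0" "mball x e \<subseteq> U" using U X openin_mtopology by metis
    obtain n where n: "1 / Suc n < e / 2"
      by (metis e(1) half_gt_zero nat_approx_posE)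
    obtain k where k: "k \<in> K n" "x \<in> mball k (1 / Suc n)"
      using K xM by blast
    have "mball k (1 / Suc n) \<subseteq> mball x e"
    proof
      fix y assume y: "y \<in> mball k (1 / Suc n)"
      have "d x y \<le> d x k + d k y" using k y xM by (auto intro: triangle)
      also have "\<dots> < e" using k y n by (auto simp: commute)
      finally show "y \<in> mball x e" using y xM by auto
    qed
    with e k show ?thesis unfolding \<B>_def by blast
  qed
  moreover have "countable \<B>" "\<forall>V\<in>\<B>. openin X V"
    unfolding \<B>_def X using K by (auto simp: countable_finite)
  ultimately show ?thesis unfolding second_countable_def by blast
qed

text \<open>The sets \<open>topspace Y - \<phi> ` (topspace X - U)\<close>, for \<open>U\<close> a finite union of basic open sets,
  form a countable basis of \<open>Y\<close>: the fibre of a point is compact, so it lies in such a \<open>U\<close> inside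
  the preimage of any open neighbourhood of the point.\<close>
lemma second_countable_continuous_image:
  assumes X: "compact_space X" "second_countable X" and Y: "Hausdorff_space Y"
    and \<phi>: "continuous_map X Y \<phi>" "\<phi> ` topspace X = topspace Y"
  shows "second_countable Y"
proof -
  obtain \<B> where \<B>: "countable \<B>" "\<And>V. V \<in> \<B> \<Longrightarrow> openin X V"
    "\<And>U x. openin X U \<Longrightarrow> x \<in> U \<Longrightarrow> \<exists>V\<in>\<B>. x \<in> V \<and> V \<subseteq> U"
    using X(2) unfolding second_countable_def by metis
  define \<U> where "\<U> = Union ` {\<F>. finite \<F> \<and> \<F> \<subseteq> \<B>}"
  define Op where "Op U = topspace Y - \<phi> ` (topspace X - U)" for U
  have open_Op: "openin Y (Op U)" if "U \<in> \<U>" for U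
  proof -
    have "compactin X (topspace X - U)"
      using that \<B>(2) X(1) closedin_compact_space unfolding \<U>_def by blast
    then show ?thesis
      unfolding Op_def using \<phi>(1) image_compactin compactin_imp_closedin Y by blast
  qed
  have base: "\<exists>U\<in>\<U>. y \<in> Op U \<and> Op U \<subseteq> W" if W: "openin Y W" "y \<in> W" for y W
  proof -
    have y: "y \<in> topspace Y" using W openin_subset by blast
    have "compactin X {x \<in> topspace X. \<phi> x \<in> {y}}"
      using closedin_continuous_map_preimage[OF \<phi>(1)] closedin_Hausdorff_singleton[OF Y y]
        X(1) closedin_compact_space by blast
    moreover have "{x \<in> topspace X. \<phi> x \<in> {y}} \<subseteq> \<Union>{V\<in>\<B>. V \<subseteq> {x \<in> topspace X. \<phi> x \<in> W}}"
      using \<B>(3)[OF openin_continuous_map_preimage[OF \<phi>(1) W(1)]] W by blast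
    ultimately obtain \<F> where \<F>: "finite \<F>" "\<F> \<subseteq> {V\<in>\<B>. V \<subseteq> {x \<in> topspace X. \<phi> x \<in> W}}"
        "{x \<in> topspace X. \<phi> x \<in> {y}} \<subseteq> \<Union>\<F>"
      using \<B>(2) unfolding compactin_def by (metis (no_types, lifting) mem_Collect_eq)
    have "y \<in> Op (\<Union>\<F>)"
      using y \<F>(3) unfolding Op_def by auto
    moreover have "Op (\<Union>\<F>) \<subseteq> W"
    proof
      fix z assume z: "z \<in> Op (\<Union>\<F>)"
      then obtain x where x: "x \<in> topspace X" "z = \<phi> x"
        using \<phi>(2) unfolding Op_def by auto
      with z have "x \<in> \<Union>\<F>" unfolding Op_def by auto
      with \<F>(2) x show "z \<in> W" by auto
    qed
    moreover have "\<Union>\<F> \<in> \<U>" using \<F> unfolding \<U>_def by blast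
    ultimately show ?thesis by blast
  qed
  moreover have "countable (Op ` \<U>)"
    unfolding \<U>_def using \<B>(1) countable_Collect_finite_subset by blast
  moreover have "\<forall>V \<in> Op ` \<U>. openin Y V"
    using open_Op by blast
  ultimately show ?thesis
    unfolding second_countable_def by (metis (no_types, lifting) imageI)
qed

lemma compact_separating_maps_imp_metrizable:
  fixes h :: "'q \<Rightarrow> 'a \<Rightarrow> real"
  assumes "compact_space Y" "countable Q"
    and h: "\<And>q. q \<in> Q \<Longrightarrow> continuous_map Y euclideanreal (h q)"
    and sep: "\<And>y z. \<lbrakk>y \<in> topspace Y; z \<in> topspace Y; y \<noteq> z\<rbrakk> \<Longrightarrow> \<exists>q\<in>Q. h q y \<noteq> h q z"
  shows "metrizable_space Y"
proof -
  define F where "F y = (\<lambda>q\<in>Q. h q y)" for y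
  let ?T = "product_topology (\<lambda>_. euclideanreal) Q"
  have "continuous_map Y ?T F"
    unfolding continuous_map_componentwise F_def using h by auto
  moreover have "inj_on F (topspace Y)"
    by (rule inj_onI, rule ccontr) (metis F_def restrict_apply' sep)
  moreover have "Hausdorff_space ?T"
    by (simp add: Hausdorff_space_product_topology)
  ultimately have "Y homeomorphic_space subtopology ?T (F ` topspace Y)"
    using continuous_imp_embedding_map assms(1) embedding_map_imp_homeomorphic_space by blast
  moreover have "metrizable_space ?T"
    unfolding metrizable_space_product_topology
    using \<open>countable Q\<close> by (auto intro: countable_subset metrizable_space_euclidean)
  ultimately show ?thesis
    using homeomorphic_metrizable_space metrizable_space_subtopology by blast
qed

text \<open>Urysohn functions for the pairs of basic sets \<open>U\<close>, \<open>V\<close> with the closure of \<open>U\<close> inside \<open>V\<close>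
  separate points, by regularity.\<close>
lemma compact_Hausdorff_second_countable_imp_metrizable:
  assumes Y: "compact_space Y" "Hausdorff_space Y" and "second_countable Y"
  shows "metrizable_space Y"
proof -
  obtain \<B> where \<B>: "countable \<B>" "\<And>V. V \<in> \<B> \<Longrightarrow> openin Y V"
    "\<And>W y. openin Y W \<Longrightarrow> y \<in> W \<Longrightarrow> \<exists>V\<in>\<B>. y \<in> V \<and> V \<subseteq> W"
    using assms(3) unfolding second_countable_def by metis
  define Q where "Q = {(U,V) \<in> \<B> \<times> \<B>. disjnt (Y closure_of U) (topspace Y - V)}"
  have "\<exists>h. continuous_map Y (top_of_set {0..1}) h \<and>
           h ` (Y closure_of fst q) \<subseteq> {0} \<and> h ` (topspace Y - snd q) \<subseteq> {1::real}" if "q \<in> Q" for q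
  proof -
    have "closedin Y (topspace Y - snd q)" and disj: "disjnt (Y closure_of fst q) (topspace Y - snd q)"
      using that \<B>(2) unfolding Q_def by auto
    moreover have "normal_space Y"
      using compact_Hausdorff_or_regular_imp_normal_space Y by blast
    ultimately show ?thesis
      using Urysohn_lemma[OF _ closedin_closure_of _ disj, of 0 1] by (metis zero_le_one)
  qed
  then obtain h where h: "\<And>q. q \<in> Q \<Longrightarrow> continuous_map Y (top_of_set {0..1}) (h q) \<and>
           h q ` (Y closure_of fst q) \<subseteq> {0} \<and> h q ` (topspace Y - snd q) \<subseteq> {1::real}"
    by metis
  have sep: "\<exists>q\<in>Q. h q y \<noteq> h q z" if yz: "y \<in> topspace Y" "z \<in> topspace Y" "y \<noteq> z" for y z
  proof -
    obtain V where V: "V \<in> \<B>" "y \<in> V" "V \<subseteq> topspace Y - {z}"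
      using \<B>(3) closedin_Hausdorff_singleton[OF Y(2) yz(2)] yz by (metis Diff_iff openin_diff openin_topspace singletonD)
    obtain W where W: "openin Y W" "y \<in> W" "disjnt (topspace Y - V) (Y closure_of W)"
      using compact_Hausdorff_imp_regular_space[OF Y] \<B>(2)[OF V(1)] V(2) yz(1)
      unfolding regular_space by (metis Diff_iff openin_closedin_eq)
    obtain U where U: "U \<in> \<B>" "y \<in> U" "U \<subseteq> W"
      using \<B>(3) W by blast
    have "Y closure_of U \<subseteq> Y closure_of W"
      by (rule closure_of_mono[OF U(3)])
    then have "disjnt (Y closure_of U) (topspace Y - V)"
      using W(3) by (auto simp: disjnt_def)
    then have "(U, V) \<in> Q"
      using U V unfolding Q_def by simp
    moreover have "y \<in> Y closure_of U" "z \<in> topspace Y - V"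
      using U V yz closure_of_subset[OF openin_subset[OF \<B>(2)]] by auto
    ultimately show ?thesis
      using h[of "(U, V)"] by force
  qed
  have "countable Q"
    by (rule countable_subset[of _ "\<B> \<times> \<B>"]) (use \<B>(1) in \<open>auto simp: Q_def\<close>)
  then show ?thesis
  proof (rule compact_separating_maps_imp_metrizable[OF Y(1)])
    show "continuous_map Y euclideanreal (h q)" if "q \<in> Q" for q
      using h[OF that] continuous_map_into_fulltopology by blast
  qed (use sep in blast)
qed

lemma metrizable_space_continuous_image:
  assumes X: "compact_space X" "metrizable_space X" and Y: "Hausdorff_space Y"
    and \<phi>: "continuous_map X Y \<phi>" "\<phi> ` topspace X = topspace Y"
  shows "metrizable_space Y"
proof (rule compact_Hausdorff_second_countable_imp_metrizable[OF _ Y])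
  show "compact_space Y"
    using image_compactin[OF X(1)[unfolded compact_space_def] \<phi>(1)] \<phi>(2) by (simp add: compact_space_def)
  show "second_countable Y"
    using second_countable_continuous_image[OF X(1) compact_metrizable_imp_second_countable[OF X] Y \<phi>] .
qed

text \<open>By compactness \<open>p\<close> is a quotient map onto its image, and \<open>g\<close> lifts to a map on that
  compact metrizable space.\<close>
lemma metrizable_space_factor_image:
  assumes X: "compact_space X" and Z: "metrizable_space Z" and p: "continuous_map X Z p"
    and Y: "Hausdorff_space Y" and g: "continuous_map X Y g" "g ` topspace X = topspace Y"
    and factor: "\<And>x y. \<lbrakk>x \<in> topspace X; y \<in> topspace X; p x = p y\<rbrakk> \<Longrightarrow> g x = g y"
  shows "metrizable_space Y"
proof -
  let ?P = "subtopology Z (p ` topspace X)"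
  have p': "continuous_map X ?P p"
    using p by (simp add: continuous_map_in_subtopology)
  have P: "compact_space ?P"
    by (rule compact_space_subtopology[OF image_compactin[OF X[unfolded compact_space_def] p]])
  have mP: "metrizable_space ?P"
    by (rule metrizable_space_subtopology[OF Z])
  have "p ` topspace X = topspace ?P"
    using continuous_map_image_subset_topspace[OF p] by auto
  then have q: "quotient_map X ?P p"
    by (rule continuous_imp_quotient_map[OF p' X metrizable_imp_Hausdorff_space[OF mP]])
  have "\<exists>\<phi>. continuous_map ?P Y \<phi> \<and> \<phi> ` topspace ?P = g ` topspace X"
    by (rule quotient_map_lift_exists[OF q g(1)]) (auto intro: factor)
  then obtain \<phi> where \<phi>: "continuous_map ?P Y \<phi>" "\<phi> ` topspace ?P = g ` topspace X"
    by blast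
  show ?thesis
    by (rule metrizable_space_continuous_image[OF P mP Y \<phi>(1)]) (use \<phi>(2) g(2) in simp)
qed

lemma closed_punctured_graph:
  fixes f :: "'a::metric_space \<Rightarrow> 'b::metric_space"
  assumes S: "closed S" and T: "closed T" and f: "continuous_on (S - {c}) f"
  shows "closed {(x, t). x \<in> S \<and> t \<in> T \<and> (x = c \<or> t = f x)}"
  unfolding closed_sequential_limits
proof (intro allI impI, elim conjE)
  fix s :: "nat \<Rightarrow> 'a \<times> 'b" and l
  assume s: "\<forall>n. s n \<in> {(x, t). x \<in> S \<and> t \<in> T \<and> (x = c \<or> t = f x)}" and "s \<longlonglongrightarrow> l"
  obtain x t where l: "l = (x, t)" by fastforce
  have x: "(\<lambda>n. fst (s n)) \<longlonglongrightarrow> x" and t: "(\<lambda>n. snd (s n)) \<longlonglongrightarrow> t"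
    using tendsto_fst[OF \<open>s \<longlonglongrightarrow> l\<close>] tendsto_snd[OF \<open>s \<longlonglongrightarrow> l\<close>] l by simp_all
  have "x \<in> S"
    by (rule Lim_in_closed_set[OF S _ _ x]) (use s in \<open>auto simp: case_prod_beta\<close>)
  moreover have "t \<in> T"
    by (rule Lim_in_closed_set[OF T _ _ t]) (use s in \<open>auto simp: case_prod_beta\<close>)
  moreover have "t = f x" if "x \<noteq> c"
  proof -
    have ev: "\<forall>\<^sub>F n in sequentially. fst (s n) \<noteq> c"
      using tendsto_imp_eventually_ne[OF x that] .
    then have "\<forall>\<^sub>F n in sequentially. fst (s n) \<in> S - {c}"
      by (rule eventually_mono) (use s in \<open>auto simp: case_prod_beta\<close>)
    then have "(\<lambda>n. f (fst (s n))) \<longlonglongrightarrow> f x"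
      using continuous_on_tendsto_compose[OF f x] \<open>x \<in> S\<close> that by simp
    moreover have evq: "\<forall>\<^sub>F n in sequentially. f (fst (s n)) = snd (s n)"
      by (rule eventually_mono[OF ev]) (use s in \<open>auto simp: case_prod_beta\<close>)
    ultimately have "(\<lambda>n. snd (s n)) \<longlonglongrightarrow> f x"
      using tendsto_cong[OF evq] by blast
    then show ?thesis using t LIMSEQ_unique by blast
  qed
  ultimately show "l \<in> {(x, t). x \<in> S \<and> t \<in> T \<and> (x = c \<or> t = f x)}"
    using l by auto
qed

lemma nowhere_dense_frontier_closed:
  assumes "closed M"
  shows "nowhere_dense_real (M - interior M)"
proof -
  have "interior (M - interior M) \<subseteq> interior M \<inter> (M - interior M)"
    using interior_mono interior_subset by blast
  then show ?thesis
    using assms unfolding nowhere_dense_real_def by (simp add: closed_Diff closure_closed)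
qed

lemma compact_space_split_ambient: "compact_space (split_ambient I)"
  unfolding split_ambient_def
  by (simp add: compact_space_prod_topology compact_space_product_topology compact_space_subtopology)

lemma topspace_split_ambient:
  "topspace (split_ambient I) = {0..1} \<times> (I \<rightarrow>\<^sub>E {-1..1})"
  by (simp add: split_ambient_def)

lemma continuous_map_split_ambient_fst: "continuous_map (split_ambient I) euclideanreal fst"
  unfolding split_ambient_def
  by (rule continuous_map_into_fulltopology[OF continuous_map_fst])

lemma continuous_map_split_ambient_coord:
  assumes "\<eta> \<in> I"
  shows "continuous_map (split_ambient I) euclideanreal (\<lambda>a. snd a \<eta>)"
  using continuous_map_into_fulltopology[OF continuous_map_compose[OF continuous_map_snd
        continuous_map_product_projection[OF assms]]]
  unfolding split_ambient_def by (simp add: o_def)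

lemma continuous_map_split_ambient_restrict:
  assumes "J \<subseteq> I"
  shows "continuous_map (split_ambient I) (split_ambient J) (\<lambda>a. (fst a, restrict (snd a) J))"
  unfolding split_ambient_def
proof (intro continuous_map_pairedI continuous_map_fst)
  show "continuous_map (prod_topology (top_of_set {0..1}) (product_topology (\<lambda>_. top_of_set {-1..1}) I))
      (product_topology (\<lambda>_. top_of_set {-1..1}) J) (\<lambda>a. restrict (snd a) J)"
    unfolding continuous_map_componentwise
  proof (intro conjI ballI)
    fix k assume "k \<in> J"
    then show "continuous_map (prod_topology (top_of_set {0..1}) (product_topology (\<lambda>_. top_of_set {-1..1}) I))
        (top_of_set {-1..1}) (\<lambda>a. restrict (snd a) J k)"
      using continuous_map_compose[OF continuous_map_snd continuous_map_product_projection, of k I]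
        assms by (auto simp: o_def)
  qed auto
qed

lemma metrizable_space_split_ambient:
  assumes "countable J"
  shows "metrizable_space (split_ambient J)"
  unfolding split_ambient_def metrizable_space_prod_topology metrizable_space_product_topology
  using assms by (auto intro: countable_subset metrizable_space_subtopology metrizable_space_euclidean)

lemma split_ambient_basic_neighbourhood:
  assumes G: "openin (split_ambient I) G" "(x, y) \<in> G"
  obtains U W where "openin (top_of_set {0..1}) U" "x \<in> U" "finite {\<eta> \<in> I. W \<eta> \<noteq> {-1..1}}"
    "\<forall>\<eta>\<in>I. openin (top_of_set {-1..1}) (W \<eta>)" "y \<in> Pi\<^sub>E I W" "U \<times> Pi\<^sub>E I W \<subseteq> G"
proof -
  have "\<forall>x y. (x, y) \<in> G \<longrightarrow> (\<exists>U V. openin (top_of_set {0..1}) U \<and>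
      openin (product_topology (\<lambda>_. top_of_set {-1..1}) I) V \<and> x \<in> U \<and> y \<in> V \<and> U \<times> V \<subseteq> G)"
    using G(1) unfolding split_ambient_def by (simp only: openin_prod_topology_alt)
  from this[rule_format, OF G(2)] obtain U V where UV: "openin (top_of_set {0..1}) U"
      "openin (product_topology (\<lambda>_. top_of_set {-1..1}) I) V" "x \<in> U" "y \<in> V" "U \<times> V \<subseteq> G"
    by blast
  have "\<forall>y\<in>V. \<exists>W. finite {\<eta> \<in> I. W \<eta> \<noteq> topspace (top_of_set {-1..1::real})} \<and>
      (\<forall>\<eta>\<in>I. openin (top_of_set {-1..1}) (W \<eta>)) \<and> y \<in> Pi\<^sub>E I W \<and> Pi\<^sub>E I W \<subseteq> V"
    using UV(2) by (simp only: openin_product_topology_alt)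
  from this[rule_format, OF UV(4)] obtain W where
    W: "finite {\<eta> \<in> I. W \<eta> \<noteq> topspace (top_of_set {-1..1::real})}"
      "\<forall>\<eta>\<in>I. openin (top_of_set {-1..1}) (W \<eta>)" "y \<in> Pi\<^sub>E I W" "Pi\<^sub>E I W \<subseteq> V"
    by blast
  have "U \<times> Pi\<^sub>E I W \<subseteq> G"
    using UV(5) W(4) by blast
  with UV(1,3) W(1-3) show ?thesis
    using that by simp
qed

locale split_interval =
  fixes I :: "'i set" and r :: "'i \<Rightarrow> real" and f :: "'i \<Rightarrow> real \<Rightarrow> real"
  assumes r_inj: "inj_on r I"
    and r_range: "r ` I \<subseteq> {0..1}"
    and splitting: "\<And>\<xi>. \<xi> \<in> I \<Longrightarrow> splitting_function (r \<xi>) (f \<xi>)"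
begin

definition fiber_point :: "'i \<Rightarrow> real \<Rightarrow> real \<times> ('i \<Rightarrow> real)" where
  "fiber_point \<xi> t = (r \<xi>, \<lambda>\<eta>\<in>I. if \<eta> = \<xi> then t else f \<eta> (r \<xi>))"

lemma f_continuous: "\<xi> \<in> I \<Longrightarrow> continuous_on ({0..1} - {r \<xi>}) (f \<xi>)"
  and f_range: "\<xi> \<in> I \<Longrightarrow> x \<in> {0..1} \<Longrightarrow> x \<noteq> r \<xi> \<Longrightarrow> f \<xi> x \<in> {-1..1}"
  and f_dense: "\<xi> \<in> I \<Longrightarrow> openin (top_of_set {0..1}) U \<Longrightarrow> r \<xi> \<in> U
      \<Longrightarrow> {-1..1} \<subseteq> closure (f \<xi> ` (U - {r \<xi>}))"
  using splitting unfolding splitting_function_def by blast+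

lemma r_eq_iff: "\<xi> \<in> I \<Longrightarrow> \<eta> \<in> I \<Longrightarrow> r \<xi> = r \<eta> \<longleftrightarrow> \<xi> = \<eta>"
  using r_inj by (auto dest: inj_onD)

lemma mem_split_points_iff:
  "a \<in> split_points I r f \<longleftrightarrow> a \<in> topspace (split_ambient I) \<and>
      (\<forall>\<eta>\<in>I. fst a \<noteq> r \<eta> \<longrightarrow> snd a \<eta> = f \<eta> (fst a))"
proof
  assume "a \<in> split_points I r f"
  then consider (fiber) \<xi> t where "\<xi> \<in> I" "t \<in> {-1..1}" "a = fiber_point \<xi> t"
    | (regular) x where "x \<in> {0..1}" "x \<notin> r ` I" "a = (x, \<lambda>\<eta>\<in>I. f \<eta> x)"
    unfolding split_points_def fiber_point_def by blast
  then show "a \<in> topspace (split_ambient I) \<and> (\<forall>\<eta>\<in>I. fst a \<noteq> r \<eta> \<longrightarrow> snd a \<eta> = f \<eta> (fst a))"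
  proof cases
    case fiber
    then show ?thesis
      using r_range f_range r_eq_iff by (auto simp: fiber_point_def topspace_split_ambient)
  next
    case regular
    moreover have "f \<eta> x \<in> {-1..1}" if "\<eta> \<in> I" for \<eta>
      using regular f_range that by blast
    ultimately show ?thesis
      by (auto simp: topspace_split_ambient)
  qed
next
  assume a: "a \<in> topspace (split_ambient I) \<and> (\<forall>\<eta>\<in>I. fst a \<noteq> r \<eta> \<longrightarrow> snd a \<eta> = f \<eta> (fst a))"
  then have a01: "fst a \<in> {0..1}" and aE: "snd a \<in> I \<rightarrow>\<^sub>E {-1..1}"
    by (auto simp: topspace_split_ambient mem_Times_iff)
  show "a \<in> split_points I r f"
  proof (cases "fst a \<in> r ` I")
    case True
    then obtain \<xi> where \<xi>: "\<xi> \<in> I" "fst a = r \<xi>" by blast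
    have "snd a = snd (fiber_point \<xi> (snd a \<xi>))"
      using a aE \<xi> r_eq_iff by (force simp: fiber_point_def PiE_def extensional_def)
    then have "a = fiber_point \<xi> (snd a \<xi>)"
      using \<xi> by (simp add: fiber_point_def prod_eq_iff)
    then show ?thesis
      unfolding split_points_def fiber_point_def using \<xi>(1) aE by blast
  next
    case False
    then have "a = (fst a, \<lambda>\<eta>\<in>I. f \<eta> (fst a))"
      using a aE by (force simp: prod_eq_iff PiE_def extensional_def)
    then show ?thesis
      unfolding split_points_def using a01 False by blast
  qed
qed

lemma split_points_subset: "split_points I r f \<subseteq> topspace (split_ambient I)"
  using mem_split_points_iff by blast

lemma topspace_split_space: "topspace (split_space I r f) = split_points I r f"
  using split_points_subset by (simp add: split_space_def Int_absorb1)

lemma fiber_point_in_split_points: "\<xi> \<in> I \<Longrightarrow> t \<in> {-1..1} \<Longrightarrow> fiber_point \<xi> t \<in> split_points I r f"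
  unfolding split_points_def fiber_point_def by blast

lemma split_points_eqI:
  assumes "a \<in> split_points I r f" "b \<in> split_points I r f" "fst a = fst b"
    and "\<And>\<xi>. \<xi> \<in> I \<Longrightarrow> fst a = r \<xi> \<Longrightarrow> snd a \<xi> = snd b \<xi>"
  shows "a = b"
proof -
  have "snd a \<eta> = snd b \<eta>" for \<eta>
  proof (cases "\<eta> \<in> I \<and> fst a = r \<eta>")
    case True
    then show ?thesis using assms(4) by blast
  next
    case False
    then show ?thesis
      using assms(1-3) unfolding mem_split_points_iff
      by (cases "\<eta> \<in> I") (auto simp: topspace_split_ambient PiE_def extensional_def)
  qed
  then show ?thesis
    using assms(3) by (simp add: prod_eq_iff fun_eq_iff)
qed

lemma split_points_fiber:
  assumes "a \<in> split_points I r f" "\<xi> \<in> I" "fst a = r \<xi>"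
  shows "a = fiber_point \<xi> (snd a \<xi>)" "snd a \<xi> \<in> {-1..1}"
proof -
  show t: "snd a \<xi> \<in> {-1..1}"
    using assms by (auto simp: mem_split_points_iff topspace_split_ambient)
  show "a = fiber_point \<xi> (snd a \<xi>)"
    by (rule split_points_eqI[OF assms(1) fiber_point_in_split_points[OF assms(2) t]])
      (use assms r_eq_iff in \<open>auto simp: fiber_point_def\<close>)
qed

lemma closedin_split_points: "closedin (split_ambient I) (split_points I r f)"
proof -
  define G where "G \<eta> = {(x, t). x \<in> {0..1} \<and> t \<in> {-1..1::real} \<and> (x = r \<eta> \<or> t = f \<eta> x)}" for \<eta>
  define A where "A \<eta> = {a \<in> topspace (split_ambient I). (fst a, snd a \<eta>) \<in> G \<eta>}" for \<eta>
  have "closedin (split_ambient I) (A \<eta>)" if "\<eta> \<in> I" for \<eta>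
    unfolding A_def
  proof (rule closedin_continuous_map_preimage)
    show "continuous_map (split_ambient I) euclidean (\<lambda>a. (fst a, snd a \<eta>))"
      using continuous_map_pairedI[OF continuous_map_split_ambient_fst
          continuous_map_split_ambient_coord[OF that]] by simp
    show "closedin euclidean (G \<eta>)"
      using closed_punctured_graph[OF closed_atLeastAtMost closed_atLeastAtMost f_continuous[OF that]]
      unfolding G_def by simp
  qed
  then have "closedin (split_ambient I) (\<Inter> (insert (topspace (split_ambient I)) (A ` I)))"
    by (intro closedin_Inter) auto
  moreover have "\<Inter> (insert (topspace (split_ambient I)) (A ` I)) = split_points I r f"
  proof (rule set_eqI)
    fix a
    show "a \<in> \<Inter> (insert (topspace (split_ambient I)) (A ` I)) \<longleftrightarrow> a \<in> split_points I r f"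
      unfolding mem_split_points_iff A_def G_def
      by (auto simp: topspace_split_ambient mem_Times_iff PiE_iff)
  qed
  ultimately show ?thesis by simp
qed

lemma continuous_map_fiber_point:
  assumes \<xi>: "\<xi> \<in> I"
  shows "continuous_map (top_of_set {-1..1}) (split_space I r f) (fiber_point \<xi>)"
proof -
  have "continuous_map (top_of_set {-1..1}) (product_topology (\<lambda>_. top_of_set {-1..1}) I)
      (\<lambda>t. \<lambda>\<eta>\<in>I. if \<eta> = \<xi> then t else f \<eta> (r \<xi>))"
    unfolding continuous_map_componentwise
    using \<xi> r_range f_range r_eq_iff by (auto simp: continuous_map_id[unfolded id_def])
  then have "continuous_map (top_of_set {-1..1}) (split_ambient I) (fiber_point \<xi>)"
    unfolding split_ambient_def fiber_point_def
    using \<xi> r_range by (intro continuous_map_pairedI) auto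
  then show ?thesis
    unfolding split_space_def continuous_map_in_subtopology
    using fiber_point_in_split_points[OF \<xi>] by auto
qed

lemma openin_splitting_preimage:
  assumes \<eta>: "\<eta> \<in> I" and W: "openin (top_of_set {-1..1}) W"
  shows "openin (top_of_set {0..1}) {x \<in> {0..1} - {r \<eta>}. f \<eta> x \<in> W}"
proof -
  have "continuous_map (top_of_set ({0..1} - {r \<eta>})) (top_of_set {-1..1}) (f \<eta>)"
    using f_continuous[OF \<eta>] f_range[OF \<eta>] by auto
  then have "openin (top_of_set ({0..1} - {r \<eta>}))
      {x \<in> topspace (top_of_set ({0..1} - {r \<eta>})). f \<eta> x \<in> W}"
    using openin_continuous_map_preimage W by blast
  moreover have "openin (top_of_set {0..1}) ({0..1} - {r \<eta>})"
    by (rule openin_delete) simp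
  ultimately show ?thesis
    using openin_trans by fastforce
qed

text \<open>Only finitely many coordinates \<open>\<eta> \<noteq> \<xi>\<close> are restricted by a basic neighbourhood of
  \<open>fiber_point \<xi> t\<close>; near \<open>r \<xi>\<close> they are controlled by the continuity of \<open>f \<eta>\<close> at \<open>r \<xi> \<noteq> r \<eta>\<close>.\<close>
lemma fiber_point_neighbourhood:
  assumes \<xi>: "\<xi> \<in> I" and G: "openin (split_ambient I) G" "fiber_point \<xi> t \<in> G"
  obtains N B where "openin (top_of_set {0..1}) N" "r \<xi> \<in> N" "open B" "t \<in> B"
    "\<And>a. \<lbrakk>a \<in> split_points I r f; fst a \<in> N; fst a \<noteq> r \<xi>; snd a \<xi> \<in> B\<rbrakk> \<Longrightarrow> a \<in> G"
proof -
  have "(r \<xi>, snd (fiber_point \<xi> t)) \<in> G"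
    using G(2) by (simp add: fiber_point_def)
  then obtain U W where U: "openin (top_of_set {0..1}) U" "r \<xi> \<in> U"
    and W: "finite {\<eta> \<in> I. W \<eta> \<noteq> {-1..1}}" "\<forall>\<eta>\<in>I. openin (top_of_set {-1..1}) (W \<eta>)"
      "snd (fiber_point \<xi> t) \<in> Pi\<^sub>E I W" "U \<times> Pi\<^sub>E I W \<subseteq> G"
    by (rule split_ambient_basic_neighbourhood[OF G(1)])
  obtain B where B: "open B" "W \<xi> = {-1..1} \<inter> B"
    using W(2) \<xi> openin_open by metis
  define F where "F = {\<eta> \<in> I. W \<eta> \<noteq> {-1..1}} - {\<xi>}"
  define P where "P \<eta> = {x \<in> {0..1} - {r \<eta>}. f \<eta> x \<in> W \<eta>}" for \<eta>
  define N where "N = U \<inter> ((\<Inter>\<eta>\<in>F. P \<eta>) \<inter> topspace (top_of_set {0..1::real}))"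
  have "openin (top_of_set {0..1}) ((\<Inter>\<eta>\<in>F. P \<eta>) \<inter> topspace (top_of_set {0..1}))"
  proof (rule openin_INT)
    show "finite F"
      using W(1) unfolding F_def by simp
    show "openin (top_of_set {0..1}) (P \<eta>)" if "\<eta> \<in> F" for \<eta>
      using that W(2) openin_splitting_preimage unfolding F_def P_def by blast
  qed
  then have "openin (top_of_set {0..1}) N"
    unfolding N_def by (rule openin_Int[OF U(1)])
  moreover have "r \<xi> \<in> N"
    using U(2) W(3) \<xi> r_range r_eq_iff unfolding N_def F_def P_def fiber_point_def
    by (auto simp: PiE_iff)
  moreover have "a \<in> G"
    if a: "a \<in> split_points I r f" "fst a \<in> N" "fst a \<noteq> r \<xi>" "snd a \<xi> \<in> B" for a
  proof -
    have "snd a \<eta> \<in> W \<eta>" if \<eta>: "\<eta> \<in> I" for \<eta>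
    proof -
      consider "\<eta> = \<xi>" | "\<eta> \<in> F" | "\<eta> \<noteq> \<xi>" "W \<eta> = {-1..1}"
        using \<eta> unfolding F_def by blast
      then show ?thesis
        using a \<eta> B(2) f_range unfolding mem_split_points_iff N_def P_def
        by cases (auto simp: topspace_split_ambient)
    qed
    then have "snd a \<in> Pi\<^sub>E I W"
      using a(1) unfolding mem_split_points_iff by (auto simp: topspace_split_ambient PiE_iff)
    moreover have "fst a \<in> U"
      using a(2) unfolding N_def by blast
    ultimately show ?thesis
      using W(4) by (metis mem_Sigma_iff prod.collapse subsetD)
  qed
  moreover have "t \<in> B"
    using W(3) \<xi> B(2) unfolding fiber_point_def by (auto simp: PiE_iff)
  ultimately show ?thesis
    using that B(1) by blast
qed

lemma fiber_point_in_closedin: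
  assumes L: "closedin (split_ambient I) L" "L \<subseteq> split_points I r f"
    and \<xi>: "\<xi> \<in> I" and int: "r \<xi> \<in> interior (fst ` L)" and t: "t \<in> {-1..1}"
  shows "fiber_point \<xi> t \<in> L"
proof (rule ccontr)
  assume "fiber_point \<xi> t \<notin> L"
  then have "openin (split_ambient I) (topspace (split_ambient I) - L)"
    "fiber_point \<xi> t \<in> topspace (split_ambient I) - L"
    using L(1) fiber_point_in_split_points[OF \<xi> t] split_points_subset by auto
  then obtain N B where N: "openin (top_of_set {0..1}) N" "r \<xi> \<in> N" and B: "open B" "t \<in> B"
    and avoid: "\<And>a. \<lbrakk>a \<in> split_points I r f; fst a \<in> N; fst a \<noteq> r \<xi>; snd a \<xi> \<in> B\<rbrakk>
        \<Longrightarrow> a \<in> topspace (split_ambient I) - L"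
    by (rule fiber_point_neighbourhood[OF \<xi>]) blast
  have "openin (top_of_set {0..1}) (N \<inter> interior (fst ` L))"
    using N(1) by (simp add: openin_Int_open)
  then have "t \<in> closure (f \<xi> ` (N \<inter> interior (fst ` L) - {r \<xi>}))"
    using f_dense[OF \<xi>] N(2) int t by blast
  then obtain x where x: "x \<in> N" "x \<in> interior (fst ` L)" "x \<noteq> r \<xi>" "f \<xi> x \<in> B"
    using B open_Int_closure_eq_empty[OF B(1)] by blast
  then obtain a where a: "a \<in> L" "fst a = x"
    using interior_subset by blast
  then have aK: "a \<in> split_points I r f"
    using L(2) by blast
  then have "snd a \<xi> = f \<xi> x"
    using a(2) x(3) \<xi> unfolding mem_split_points_iff by auto
  then have "a \<notin> L"
    using avoid[OF aK] a(2) x by auto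
  then show False
    using a(1) by contradiction
qed

lemma countable_incomplete_fibers:
  assumes luzin: "luzin_set (r ` I)"
    and L: "closedin (split_ambient I) L" "L \<subseteq> split_points I r f"
  shows "countable {\<xi> \<in> I. r \<xi> \<in> fst ` L \<and> \<not> fiber_point \<xi> ` {-1..1} \<subseteq> L}"
    (is "countable ?J")
proof -
  have "compactin euclideanreal (fst ` L)"
    using image_compactin[OF closedin_compact_space[OF compact_space_split_ambient L(1)]
        continuous_map_split_ambient_fst] .
  then have "nowhere_dense_real (fst ` L - interior (fst ` L))"
    by (simp add: compact_imp_closed nowhere_dense_frontier_closed)
  then have "countable (r ` I \<inter> (fst ` L - interior (fst ` L)))"
    using luzin unfolding luzin_set_def by blast
  moreover have "r ` ?J \<subseteq> r ` I \<inter> (fst ` L - interior (fst ` L))"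
  proof
    fix x assume "x \<in> r ` ?J"
    then obtain \<xi> where \<xi>: "\<xi> \<in> I" "r \<xi> \<in> fst ` L" "\<not> fiber_point \<xi> ` {-1..1} \<subseteq> L" "x = r \<xi>"
      by blast
    then have "r \<xi> \<notin> interior (fst ` L)"
      using fiber_point_in_closedin[OF L \<xi>(1)] by blast
    then show "x \<in> r ` I \<inter> (fst ` L - interior (fst ` L))"
      using \<xi> by blast
  qed
  ultimately have "countable (r ` ?J)"
    using countable_subset by blast
  then show ?thesis
    by (rule countable_image_inj_on[OF _ inj_on_subset[OF r_inj]]) auto
qed

lemma totally_disconnected_fiber_image:
  assumes g: "continuous_map (split_space I r f) Y g"
    and td: "totally_disconnected_space (subtopology Y C)"
    and \<xi>: "\<xi> \<in> I" and C: "g ` fiber_point \<xi> ` {-1..1} \<subseteq> C"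
    and ab: "a \<in> split_points I r f" "b \<in> split_points I r f" "fst a = r \<xi>" "fst b = r \<xi>"
  shows "g a = g b"
proof -
  have "continuous_map (top_of_set {-1..1}) (subtopology Y C) (g \<circ> fiber_point \<xi>)"
    using continuous_map_compose[OF continuous_map_fiber_point[OF \<xi>] g] C
    by (auto simp: continuous_map_in_subtopology)
  then have "connectedin (subtopology Y C) ((g \<circ> fiber_point \<xi>) ` {-1..1})"
    by (rule connectedin_continuous_map_image) (simp add: connectedin_subtopology)
  then have "(g \<circ> fiber_point \<xi>) ` {-1..1} \<subseteq> connected_component_of_set (subtopology Y C) (g a)"
    using split_points_fiber[OF ab(1) \<xi> ab(3)]
    by (intro connected_component_of_maximal) (auto intro: image_eqI[where x = "snd a \<xi>"])
  also have "\<dots> = {g a}"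
  proof -
    have "g a \<in> topspace (subtopology Y C)"
      using C split_points_fiber[OF ab(1) \<xi> ab(3)] continuous_map_image_subset_topspace[OF g] ab(1)
      by (auto simp: topspace_split_space)
    then show ?thesis
      using td unfolding totally_disconnected_space_def by blast
  qed
  finally have "g (fiber_point \<xi> (snd b \<xi>)) = g a"
    using split_points_fiber(2)[OF ab(2) \<xi> ab(4)] by (auto simp: image_subset_iff)
  then show ?thesis
    using split_points_fiber(1)[OF ab(2) \<xi> ab(4)] by simp
qed

lemma countable_separated_fibers:
  assumes luzin: "luzin_set (r ` I)"
    and g: "continuous_map (split_space I r f) Y g" and td: "totally_disconnected_space (subtopology Y C)"
    and L_eq: "L = {a \<in> split_points I r f. g a \<in> C}" and L: "closedin (split_ambient I) L"
  shows "countable {\<xi> \<in> I. \<exists>a\<in>L. \<exists>b\<in>L. fst a = r \<xi> \<and> fst b = r \<xi> \<and> g a \<noteq> g b}"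
proof (rule countable_subset[OF _ countable_incomplete_fibers[OF luzin L]])
  show "{\<xi> \<in> I. \<exists>a\<in>L. \<exists>b\<in>L. fst a = r \<xi> \<and> fst b = r \<xi> \<and> g a \<noteq> g b}
      \<subseteq> {\<xi> \<in> I. r \<xi> \<in> fst ` L \<and> \<not> fiber_point \<xi> ` {-1..1} \<subseteq> L}"
  proof
    fix \<xi> assume "\<xi> \<in> {\<xi> \<in> I. \<exists>a\<in>L. \<exists>b\<in>L. fst a = r \<xi> \<and> fst b = r \<xi> \<and> g a \<noteq> g b}"
    then obtain a b where ab: "\<xi> \<in> I" "a \<in> L" "b \<in> L" "fst a = r \<xi>" "fst b = r \<xi>" "g a \<noteq> g b"
      by blast
    have "\<not> fiber_point \<xi> ` {-1..1} \<subseteq> L"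
      using totally_disconnected_fiber_image[OF g td ab(1) _ _ _ ab(4,5)] ab(2,3,6)
      unfolding L_eq by blast
    then show "\<xi> \<in> {\<xi> \<in> I. r \<xi> \<in> fst ` L \<and> \<not> fiber_point \<xi> ` {-1..1} \<subseteq> L}"
      using ab by force
  qed
qed (simp add: L_eq)

text \<open>Over the countably many points \<open>r \<xi>\<close>, \<open>\<xi> \<in> J\<close>, where \<open>g\<close> separates points of a fiber,
  the coordinate \<open>\<xi>\<close> is kept; elsewhere \<open>g\<close> only depends on the first coordinate.\<close>
lemma totally_disconnected_imp_metrizable:
  fixes Y :: "'b topology" and g :: "real \<times> ('i \<Rightarrow> real) \<Rightarrow> 'b"
  assumes luzin: "luzin_set (r ` I)" and Y: "Hausdorff_space Y"
    and g: "continuous_map (split_space I r f) Y g" "g ` topspace (split_space I r f) = topspace Y"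
    and C: "compactin Y C" and td: "totally_disconnected_space (subtopology Y C)"
  shows "metrizable_space (subtopology Y C)"
proof -
  define L where "L = {a \<in> split_points I r f. g a \<in> C}"
  have "closedin (split_space I r f) L"
    using closedin_continuous_map_preimage[OF g(1) compactin_imp_closedin[OF Y C]]
    unfolding L_def topspace_split_space .
  then have L: "closedin (split_ambient I) L" "L \<subseteq> split_points I r f"
    using closedin_trans_full[OF _ closedin_split_points] unfolding split_space_def L_def by auto
  define J where "J = {\<xi> \<in> I. \<exists>a\<in>L. \<exists>b\<in>L. fst a = r \<xi> \<and> fst b = r \<xi> \<and> g a \<noteq> g b}"
  have "countable J"
    unfolding J_def by (rule countable_separated_fibers[OF luzin g(1) td L_def L(1)])
  define p where "p a = (fst a, restrict (snd a) J)" for a :: "real \<times> ('i \<Rightarrow> real)"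
  have factor: "g a = g b" if ab: "a \<in> L" "b \<in> L" "p a = p b" for a b
  proof (cases "\<exists>\<xi>\<in>I - J. fst a = r \<xi>")
    case True
    then show ?thesis
      using ab unfolding J_def p_def by auto
  next
    case False
    have "a = b"
    proof (rule split_points_eqI)
      show "snd a \<xi> = snd b \<xi>" if "\<xi> \<in> I" "fst a = r \<xi>" for \<xi>
        using False that ab(3) unfolding p_def by (metis DiffI prod.inject restrict_apply')
    qed (use ab L(2) p_def in auto)
    then show ?thesis by simp
  qed
  let ?X = "subtopology (split_space I r f) L"
  have topspace_X: "topspace ?X = L"
    using L(2) by (auto simp: topspace_split_space)
  show ?thesis
  proof (rule metrizable_space_factor_image[OF _ metrizable_space_split_ambient[OF \<open>countable J\<close>]])
    show "compact_space ?X"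
      using closedin_compact_space[OF compact_space_split_ambient L(1)] L(2)
      by (simp add: split_space_def subtopology_subtopology Int_absorb1 compact_space_subtopology)
    show "continuous_map ?X (split_ambient J) p"
      unfolding p_def split_space_def
      by (auto intro!: continuous_map_from_subtopology continuous_map_split_ambient_restrict simp: J_def)
    show "continuous_map ?X (subtopology Y C) g"
      using continuous_map_from_subtopology[OF g(1)] topspace_X
      by (simp add: continuous_map_in_subtopology L_def image_subset_iff)
    show "g ` topspace ?X = topspace (subtopology Y C)"
      using topspace_X g(2) compactin_subset_topspace[OF C]
      unfolding L_def topspace_split_space by auto
  qed (use Y factor topspace_X in \<open>auto simp: Hausdorff_space_subtopology\<close>)
qed

end

theorem theorem4p3:
  fixes I :: "'i set" and r :: "'i \<Rightarrow> real" and f :: "'i \<Rightarrow> real \<Rightarrow> real"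
    and Y :: "'b topology" and g :: "real \<times> ('i \<Rightarrow> real) \<Rightarrow> 'b"
  assumes r_inj: "inj_on r I"
    and r_range: "r ` I \<subseteq> {0..1}"
    and luzin: "luzin_set (r ` I)"
    and split: "\<And>\<xi>. \<xi> \<in> I \<Longrightarrow> splitting_function (r \<xi>) (f \<xi>)"
    and Y_haus: "Hausdorff_space Y"
    and g_cont: "continuous_map (split_space I r f) Y g"
    and g_onto: "g ` topspace (split_space I r f) = topspace Y"
    and C_compact: "compactin Y C"
    and C_nonmetr: "\<not> metrizable_space (subtopology Y C)"
  shows "\<not> totally_disconnected_space (subtopology Y C)"
proof
  assume "totally_disconnected_space (subtopology Y C)"
  interpret split_interval I r f
    using r_inj r_range split by unfold_locales
  have "metrizable_space (subtopology Y C)"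
    by (rule totally_disconnected_imp_metrizable) fact+
  with C_nonmetr show False
    by contradiction
qed

end
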